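(* Let $k,s\ge 1$ be integers. Then for every positive integer $n$, $$\frac{\sigma_{ks}(n)}{n^{ks}}=\zeta\big((k+1)s\big)\sum_{r=1}^{\infty}\frac{c_r^{s}(n^s)}{r^{(k+1)s}}.$$
   Context: For $s\in\mathbb{N}$ and integers $a,b$, $(a,b)_s$ denotes the largest $d^s$ with $d\in\mathbb{N}$ such that $d^s\mid a$ and $d^s\mid b$. The Cohen–Ramanujan sum is defined for $r,s\in\mathbb{N}$ and $n\in\mathbb{Z}$ by $$c_r^{s}(n)=\sum_{\substack{h=1\\ (h,r^s)_s=1}}^{r^s} e^{2\pi i n h/r^s}.$$ For $m,n\in\mathbb{N}$, $\sigma_m(n)=\sum_{d\mid n} d^m$. $\zeta$ denotes the Riemann zeta function. *)

theory Defs
  imports "HOL-Analysis.Analysis"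
begin

definition gcd_s :: "nat \<Rightarrow> int \<Rightarrow> int \<Rightarrow> nat" where
  "gcd_s s a b = Max {d ^ s | d::nat. d \<ge> 1 \<and> int (d ^ s) dvd a \<and> int (d ^ s) dvd b}"

definition cohen_ramanujan :: "nat \<Rightarrow> nat \<Rightarrow> int \<Rightarrow> complex" where
  "cohen_ramanujan r s n =
     (\<Sum>h \<in> {h \<in> {1..r ^ s}. gcd_s s (int h) (int (r ^ s)) = 1}.
        exp (2 * pi * \<i> * of_int n * of_nat h / of_nat (r ^ s)))"

definition sigma :: "nat \<Rightarrow> nat \<Rightarrow> nat" where
  "sigma m n = (\<Sum>d \<in> {d. d dvd n}. d ^ m)"

definition zeta :: "real \<Rightarrow> real" where
  "zeta x = (\<Sum>n. 1 / (real (Suc n)) powr x)"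

end

theory Submission
  imports Defs "HOL-Computational_Algebra.Squarefree"
begin

text \<open>
  Moebius inversion of the condition (h, r^s)_s = 1 gives
  c_r^s(N) = sum_{d | r} mu(d) G(r/d), where G(m) = sum_{j=1}^{m^s} e(N j / m^s) is m^s
  if m^s divides N and 0 otherwise. The inversion works because the d | r with d^s | h
  are exactly the divisors of the largest such d, whose s-th power is (h, r^s)_s.
  Hence the Dirichlet series sum_r c_r^s(n^s) r^(-(k+1)s) is the Dirichlet product of
  sum_d mu(d) d^(-(k+1)s) = 1 / zeta((k+1)s) with the finite series
  sum_{m | n} m^(-ks) = sigma_ks(n) / n^ks.
\<close>

section \<open>Dirichlet products\<close>

lemma has_sum_dirichlet_prod:
  fixes a b :: "nat \<Rightarrow> 'a :: {banach, real_normed_div_algebra}"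
  assumes a: "(\<lambda>m. norm (a m)) summable_on {0<..}"
      and b: "(\<lambda>m. norm (b m)) summable_on {0<..}"
  shows "((\<lambda>N. \<Sum>d | d dvd N. a d * b (N div d)) has_sum
           (\<Sum>\<^sub>\<infinity>m\<in>{0<..}. a m) * (\<Sum>\<^sub>\<infinity>m\<in>{0<..}. b m)) {0<..}"
proof -
  let ?P = "{0<..} :: nat set" and ?A = "infsum a {0<..}" and ?B = "infsum b {0<..}"
  have abs: "(\<lambda>p. norm (case p of (x, y) \<Rightarrow> a x * b y)) summable_on ?P \<times> ?P"
  proof (subst Infinite_Sum.abs_summable_on_Sigma_iff, unfold prod.case, intro conjI ballI)
    show "(\<lambda>y. norm (a x * b y)) summable_on ?P" for x
      using summable_on_cmult_right[OF b, of "norm (a x)"] by (simp add: norm_mult)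
    have "(\<lambda>x. norm (a x) * infsum (\<lambda>y. norm (b y)) ?P) summable_on ?P"
      using summable_on_cmult_left[OF a] .
    moreover have "infsum (\<lambda>y. norm (b y)) ?P \<ge> 0"
      by (rule infsum_nonneg) simp
    ultimately show "(\<lambda>x. norm (\<Sum>\<^sub>\<infinity>y\<in>?P. norm (a x * b y))) summable_on ?P"
      by (simp add: norm_mult infsum_cmult_right' abs_mult)
  qed
  have "((\<lambda>(x, y). a x * b y) has_sum ?A * ?B) (?P \<times> ?P)"
  proof (rule has_sum_SigmaI[where g = "\<lambda>x. a x * ?B", OF _ _ abs_summable_summable[OF abs]])
    show "((\<lambda>y. case (x, y) of (x, y) \<Rightarrow> a x * b y) has_sum a x * ?B) ?P" for x
      using has_sum_cmult_right[OF has_sum_infsum, of b ?P "a x"] b abs_summable_summable by auto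
    show "((\<lambda>x. a x * ?B) has_sum ?A * ?B) ?P"
      using has_sum_cmult_left[OF has_sum_infsum, of a ?P ?B] a abs_summable_summable by auto
  qed
  also have "?this \<longleftrightarrow> ((\<lambda>(N, d). a d * b (N div d)) has_sum ?A * ?B) (SIGMA N:?P. {d. d dvd N})"
    by (rule has_sum_reindex_bij_witness[where i = "\<lambda>(N, d). (d, N div d)" and j = "\<lambda>(x, y). (x * y, x)"])
       auto
  finally have "((\<lambda>(N, d). a d * b (N div d)) has_sum ?A * ?B) (SIGMA N:?P. {d. d dvd N})" .
  then show ?thesis
    by (rule has_sum_SigmaD) (auto intro!: has_sum_finiteI)
qed

section \<open>The Moebius function\<close>

definition moebius_mu :: "nat \<Rightarrow> int" where
  "moebius_mu n = (if squarefree n then (-1) ^ card (prime_factors n) else 0)"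

lemma abs_moebius_mu_le: "\<bar>moebius_mu n\<bar> \<le> 1"
  by (simp add: moebius_mu_def)

lemma sum_Pow_neg_one_power_card:
  assumes "finite A" "A \<noteq> {}"
  shows "(\<Sum>T\<in>Pow A. (-1) ^ card T) = (0 :: 'a :: ring_1)"
proof (rule sum_alternating_cancels)
  have "{} \<subset> A" using assms(2) by blast
  from card_subsupersets_even_odd[OF assms(1) this]
  show "card {T \<in> Pow A. even (card T)} = card {T \<in> Pow A. odd (card T)}"
    by (simp add: Pow_def conj_commute)
qed (use assms(1) in simp)

lemma squarefree_prod_prime_factors:
  assumes "squarefree (n :: nat)"
  shows "\<Prod>(prime_factors n) = n"
proof -
  have "n \<noteq> 0" using assms by (metis not_squarefree_0)
  have "\<Prod>(prime_factors n) = (\<Prod>p\<in>prime_factors n. p ^ multiplicity p n)"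
    using assms \<open>n \<noteq> 0\<close> by (intro prod.cong) (auto simp: squarefree_factorial_semiring')
  also have "\<dots> = n"
    using \<open>n \<noteq> 0\<close> by (simp add: prod_prime_factors)
  finally show ?thesis .
qed

lemma
  fixes T :: "nat set"
  assumes "finite T" "\<And>p. p \<in> T \<Longrightarrow> prime p"
  shows squarefree_prod_primes: "squarefree (\<Prod>T)"
    and prime_factors_prod_primes: "prime_factors (\<Prod>T) = T"
proof -
  show "squarefree (\<Prod>T)"
    using assms(2) by (intro squarefree_prod_coprime) (auto intro: primes_coprime squarefree_prime)
  have "0 \<notin> T" using assms(2) not_prime_0 by blast
  then show "prime_factors (\<Prod>T) = T"
    using assms by (auto simp: prime_factors_prod prime_prime_factors)
qed

lemma prod_prime_factors_dvd: "\<Prod>(prime_factors n) dvd (n :: nat)"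
proof (cases "n = 0")
  case False
  have "\<Prod>(prime_factors n) dvd (\<Prod>p\<in>prime_factors n. p ^ multiplicity p n)"
    by (intro prod_dvd_prod dvd_power) (auto simp: prime_factors_multiplicity)
  then show ?thesis using False by (simp add: prod_prime_factors)
qed simp

lemma sum_moebius_mu_divisors:
  assumes "n > 0"
  shows "(\<Sum>d | d dvd n. moebius_mu d) = (if n = 1 then 1 else 0)"
proof -
  have "(\<Sum>d | d dvd n. moebius_mu d) = (\<Sum>d | d dvd n \<and> squarefree d. (-1) ^ card (prime_factors d))"
    using assms by (intro sum.mono_neutral_cong_right) (auto simp: moebius_mu_def)
  also have "\<dots> = (\<Sum>T\<in>Pow (prime_factors n). (-1) ^ card T)"
  proof (rule sum.reindex_bij_witness[where i = Prod and j = prime_factors])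
    fix T assume "T \<in> Pow (prime_factors n)"
    then have T: "finite T" "\<And>p. p \<in> T \<Longrightarrow> prime p" "T \<subseteq> prime_factors n"
      using finite_subset by auto
    show "prime_factors (\<Prod>T) = T"
      using T(1,2) by (rule prime_factors_prod_primes)
    have "\<Prod>T dvd \<Prod>(prime_factors n)"
      using T(3) by (intro prod_dvd_prod_subset) auto
    then have "\<Prod>T dvd n"
      using prod_prime_factors_dvd dvd_trans by blast
    then show "\<Prod>T \<in> {d. d dvd n \<and> squarefree d}"
      using squarefree_prod_primes[OF T(1,2)] by simp
  qed (use assms in \<open>auto simp: squarefree_prod_prime_factors dvd_prime_factors\<close>)
  also have "\<dots> = (if n = 1 then 1 else 0)"
    using assms by (simp add: sum_Pow_neg_one_power_card prime_factorization_empty_iff)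
  finally show ?thesis .
qed

section \<open>Cohen--Ramanujan sums\<close>

lemma lcm_power_nat: "lcm (a :: nat) b ^ n = lcm (a ^ n) (b ^ n)"
  by (simp add: lcm_nat_def div_power power_mult_distrib)

lemma lcm_closed_eq_divisors_Max:
  fixes D :: "nat set"
  assumes "finite D" "D \<noteq> {}"
    and dvd_closed: "\<And>d e. d \<in> D \<Longrightarrow> e dvd d \<Longrightarrow> e \<in> D"
    and lcm_closed: "\<And>d e. d \<in> D \<Longrightarrow> e \<in> D \<Longrightarrow> lcm d e \<in> D"
  shows "D = {d. d dvd Max D}"
proof (intro set_eqI iffI)
  have "Max D \<in> D" using assms(1,2) by (rule Max_in)
  have "0 \<notin> D"
  proof
    assume "0 \<in> D"
    then have "UNIV \<subseteq> D" using dvd_closed by blast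
    with assms(1) show False using infinite_UNIV_nat finite_subset by blast
  qed
  fix d assume "d \<in> D"
  then have "lcm d (Max D) \<in> D" using \<open>Max D \<in> D\<close> by (rule lcm_closed)
  then have "lcm d (Max D) \<le> Max D" "lcm d (Max D) \<noteq> 0"
    using assms(1) \<open>0 \<notin> D\<close> by (simp, metis)
  then have "lcm d (Max D) = Max D"
    by (meson dvd_imp_le dvd_lcm2 le_antisym not_gr0)
  then show "d \<in> {d. d dvd Max D}" by (metis dvd_lcm1 mem_Collect_eq)
next
  fix d assume "d \<in> {d. d dvd Max D}"
  then show "d \<in> D" using dvd_closed Max_in assms(1,2) by auto
qed

lemma gcd_s_eq_Max_power:
  assumes "s > 0" "r > 0"
  shows "gcd_s s (int h) (int (r ^ s)) = Max {d. d dvd r \<and> d ^ s dvd h} ^ s"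
proof -
  let ?D = "{d. d dvd r \<and> d ^ s dvd h}"
  have "{d ^ s |d. d \<ge> 1 \<and> int (d ^ s) dvd int h \<and> int (d ^ s) dvd int (r ^ s)} = (\<lambda>d. d ^ s) ` ?D"
    using assms by (auto simp: Suc_le_eq simp flip: of_nat_power intro: Nat.gr0I)
      (metis dvd_pos_nat)
  moreover have "finite ?D" using assms(2) by simp
  moreover have "1 \<in> ?D" by simp
  ultimately show ?thesis
    unfolding gcd_s_def by (metis (no_types, lifting) empty_iff mono_Max_commute monoI power_mono zero_le)
qed

lemma sum_moebius_mu_gcd_s:
  assumes "s > 0" "r > 0"
  shows "(\<Sum>d | d dvd r \<and> d ^ s dvd h. moebius_mu d) = (if gcd_s s (int h) (int (r ^ s)) = 1 then 1 else 0)"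
proof -
  let ?D = "{d. d dvd r \<and> d ^ s dvd h}"
  have "finite ?D" using assms(2) by simp
  have "?D = {d. d dvd Max ?D}"
  proof (rule lcm_closed_eq_divisors_Max)
    show "finite ?D" "?D \<noteq> {}" using assms(2) by auto
    show "e \<in> ?D" if "d \<in> ?D" "e dvd d" for d e
      using that by (auto intro: dvd_trans dvd_power_same)
    show "lcm d e \<in> ?D" if "d \<in> ?D" "e \<in> ?D" for d e
      using that by (simp add: lcm_power_nat)
  qed
  moreover have "Max ?D \<in> ?D"
    using \<open>finite ?D\<close> by (rule Max_in) auto
  then have "Max ?D > 0"
    using assms(2) by (intro Nat.gr0I) auto
  ultimately show ?thesis
    using sum_moebius_mu_divisors[of "Max ?D"] gcd_s_eq_Max_power[OF assms, of h] assms(1) by simp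
qed

lemma sum_exp_two_pi_i_div:
  fixes N :: int
  assumes "q > 0"
  shows "(\<Sum>j=1..q. exp (2 * pi * \<i> * of_int N * of_nat j / of_nat q)) = (if int q dvd N then of_nat q else 0)"
proof -
  define w where "w = exp (2 * pi * \<i> * of_int N / of_nat q)"
  have pow: "exp (2 * pi * \<i> * of_int N * of_nat j / of_nat q) = w ^ j" for j
    unfolding w_def by (simp add: exp_of_nat_mult [symmetric] mult_ac)
  have "w = 1 \<longleftrightarrow> int q dvd N"
  proof
    assume "w = 1"
    then obtain k :: int where "2 * pi * of_int N / of_nat q = of_int (2 * k) * pi"
      unfolding w_def exp_eq_1 by auto
    then have "N = k * int q" using assms by (simp add: field_simps) (metis of_int_eq_iff of_int_mult of_int_of_nat_eq)
    then show "int q dvd N" by simp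
  next
    assume "int q dvd N"
    then obtain k where "N = int q * k" by (elim dvdE)
    then show "w = 1" using assms unfolding w_def by (simp add: field_simps)
  qed
  moreover have "w ^ q = exp (\<i> * (of_int N * (of_real pi * 2)))"
    using assms unfolding pow [symmetric] by (simp add: mult_ac)
  then have "w ^ q = 1" by simp
  ultimately show ?thesis
    unfolding pow using assms by (simp add: sum_gp field_simps)
qed

lemma sum_multiples_atLeastAtMost:
  assumes "(a :: nat) > 0"
  shows "(\<Sum>h | h \<in> {1..a * b} \<and> a dvd h. f h) = (\<Sum>j=1..b. f (a * j))"
proof -
  have "{h. h \<in> {1..a * b} \<and> a dvd h} = (\<lambda>j. a * j) ` {1..b}"
    using assms by (auto simp: Suc_le_eq)
  moreover have "inj_on (\<lambda>j. a * j) {1..b}"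
    using assms by (simp add: inj_on_def)
  ultimately show ?thesis by (simp add: sum.reindex)
qed

lemma cohen_ramanujan_moebius:
  assumes "s > 0" "r > 0"
  shows "cohen_ramanujan r s N =
    (\<Sum>d | d dvd r. of_int (moebius_mu d) *
       (if int ((r div d) ^ s) dvd N then of_nat ((r div d) ^ s) else 0))"
proof -
  define E where "E h = exp (2 * pi * \<i> * of_int N * of_nat h / of_nat (r ^ s))" for h :: nat
  have "cohen_ramanujan r s N =
      (\<Sum>h=1..r^s. of_int (\<Sum>d | d dvd r \<and> d ^ s dvd h. moebius_mu d) * E h)"
    unfolding cohen_ramanujan_def E_def sum_moebius_mu_gcd_s[OF assms]
    by (subst sum.inter_filter) (auto intro!: sum.cong)
  also have "\<dots> = (\<Sum>h=1..r^s. \<Sum>d | d dvd r. if d ^ s dvd h then of_int (moebius_mu d) * E h else 0)"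
    using assms(2) by (simp add: sum_distrib_right sum.inter_filter [symmetric] conj_commute)
  also have "\<dots> = (\<Sum>d | d dvd r. of_int (moebius_mu d) * (\<Sum>h=1..r^s. if d ^ s dvd h then E h else 0))"
    by (subst sum.swap) (auto simp: sum_distrib_left intro!: sum.cong)
  also have "\<dots> = (\<Sum>d | d dvd r. of_int (moebius_mu d) *
       (if int ((r div d) ^ s) dvd N then of_nat ((r div d) ^ s) else 0))"
  proof (rule sum.cong [OF refl])
    fix d assume "d \<in> {d. d dvd r}"
    then obtain e where r: "r = d * e" by auto
    with assms(2) have "d > 0" "e > 0" by auto
    have "(\<Sum>h=1..r^s. if d ^ s dvd h then E h else 0) = (\<Sum>h | h \<in> {1..r^s} \<and> d ^ s dvd h. E h)"
      by (rule sum.inter_filter [symmetric]) simp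
    also have "\<dots> = (\<Sum>j=1..e^s. E (d ^ s * j))"
      using \<open>d > 0\<close> unfolding r power_mult_distrib by (intro sum_multiples_atLeastAtMost) simp
    also have "\<dots> = (\<Sum>j=1..e^s. exp (2 * pi * \<i> * of_int N * of_nat j / of_nat (e ^ s)))"
      using \<open>d > 0\<close> by (simp add: E_def r power_mult_distrib mult_ac)
    also have "\<dots> = (if int (e ^ s) dvd N then of_nat (e ^ s) else 0)"
      using \<open>e > 0\<close> by (intro sum_exp_two_pi_i_div) simp
    finally show "of_int (moebius_mu d) * (\<Sum>h=1..r^s. if d ^ s dvd h then E h else 0) =
        of_int (moebius_mu d) * (if int ((r div d) ^ s) dvd N then of_nat ((r div d) ^ s) else 0)"
      using \<open>d > 0\<close> by (simp add: r)
  qed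
  finally show ?thesis .
qed

section \<open>Dirichlet series\<close>

lemma zeta_has_sum:
  assumes "K \<ge> 2"
  shows "((\<lambda>m. 1 / real m ^ K) has_sum zeta K) {0<..}"
proof -
  have summable: "summable (\<lambda>n. 1 / real (Suc n) ^ K)"
    using inverse_power_summable[OF assms, where 'a = real]
    by (subst summable_Suc_iff) (simp add: divide_inverse)
  then have "(\<lambda>n. 1 / real (Suc n) ^ K) sums zeta K"
    by (simp add: zeta_def powr_realpow summable_sums)
  with summable have "((\<lambda>n. 1 / real (Suc n) ^ K) has_sum zeta K) UNIV"
    by (intro norm_summable_imp_has_sum) simp_all
  also have "?this \<longleftrightarrow> ?thesis"
    by (rule has_sum_reindex_bij_witness[where i = "\<lambda>m. m - 1" and j = Suc]) auto
  finally show ?thesis .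
qed

lemma moebius_series_abs_summable:
  assumes "K \<ge> 2"
  shows "(\<lambda>d. norm (of_int (moebius_mu d) / of_nat d ^ K :: 'a :: real_normed_field)) summable_on {0<..}"
proof (rule Infinite_Sum.abs_summable_on_comparison_test')
  show "(\<lambda>d. 1 / real d ^ K) summable_on {0<..}"
    using zeta_has_sum[OF assms] by (rule has_sum_imp_summable)
  show "norm (of_int (moebius_mu d) / of_nat d ^ K :: 'a) \<le> 1 / real d ^ K" for d
    using abs_moebius_mu_le[of d] by (simp add: norm_divide norm_power divide_right_mono)
qed

lemma of_nat_power_mult_cofactor:
  assumes "d dvd N"
  shows "of_nat d ^ K * of_nat (N div d) ^ K = (of_nat N ^ K :: 'a :: comm_semiring_1)"
  using assms by (simp flip: power_mult_distrib of_nat_mult)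

lemma moebius_series_mult_zeta:
  assumes "K \<ge> 2"
  shows "(\<Sum>\<^sub>\<infinity>d\<in>{0<..}. of_int (moebius_mu d) / of_nat d ^ K :: 'a :: {banach, real_normed_field}) *
           of_real (zeta K) = 1"
proof -
  let ?a = "\<lambda>d. of_int (moebius_mu d) / of_nat d ^ K :: 'a" and ?b = "\<lambda>m. 1 / of_nat m ^ K :: 'a"
  have b: "(?b has_sum of_real (zeta K)) {0<..}"
    using has_sum_of_real[where 'a = 'a, OF zeta_has_sum[OF assms]] by simp
  have "(\<lambda>m. norm (?b m)) summable_on {0<..}"
    using has_sum_imp_summable[OF zeta_has_sum[OF assms]] by (simp add: norm_divide norm_power)
  with moebius_series_abs_summable[OF assms]
  have dirichlet: "((\<lambda>N. \<Sum>d | d dvd N. ?a d * ?b (N div d)) has_sum infsum ?a {0<..} * of_real (zeta K)) {0<..}"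
    unfolding infsumI[OF b, symmetric] by (rule has_sum_dirichlet_prod)
  have unit: "(\<Sum>d | d dvd N. ?a d * ?b (N div d)) = (if N = 1 then 1 else 0)" if "N \<in> {0<..}" for N
  proof -
    have "(\<Sum>d | d dvd N. ?a d * ?b (N div d)) = of_int (\<Sum>d | d dvd N. moebius_mu d) / of_nat N ^ K"
      by (simp add: of_nat_power_mult_cofactor sum_divide_distrib)
    also have "\<dots> = (if N = 1 then 1 else 0)"
      using that by (simp add: sum_moebius_mu_divisors)
    finally show ?thesis .
  qed
  have "((\<lambda>N :: nat. if N = 1 then 1 else 0) has_sum infsum ?a {0<..} * of_real (zeta K)) {0<..}"
    using dirichlet unit by (rule has_sum_cong [THEN iffD1, rotated])
  moreover have "((\<lambda>N :: nat. if N = 1 then 1 else 0 :: 'a) has_sum 1) {0<..}"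
    by (rule has_sum_finite_neutralI[of "{1}"]) auto
  ultimately show ?thesis by (rule has_sum_unique)
qed

lemma has_sum_divisor_inverse_powers:
  assumes "n > 0"
  shows "((\<lambda>d. if d dvd n then 1 / of_nat d ^ m else 0) has_sum
           (of_nat (sigma m n) / of_nat n ^ m :: 'a :: real_normed_field)) {0<..}"
proof (rule has_sum_finite_neutralI[of "{d. d dvd n}"])
  have "of_nat (sigma m n) / of_nat n ^ m = (\<Sum>d | d dvd n. 1 / of_nat (n div d) ^ m :: 'a)"
    unfolding sigma_def of_nat_sum sum_divide_distrib
  proof (rule sum.cong [OF refl])
    fix d assume "d \<in> {d. d dvd n}"
    then show "of_nat (d ^ m) / of_nat n ^ m = 1 / (of_nat (n div d) ^ m :: 'a)"
      using assms of_nat_power_mult_cofactor[of d n m] by (auto simp: field_simps)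
  qed
  also have "\<dots> = (\<Sum>d | d dvd n. 1 / of_nat d ^ m)"
    by (rule sum.reindex_bij_witness[where i = "\<lambda>d. n div d" and j = "\<lambda>d. n div d"])
       (use assms in \<open>auto simp: div_div_eq_right dvd_div_eq_mult\<close>)
  finally show "of_nat (sigma m n) / of_nat n ^ m = (\<Sum>d | d dvd n. if d dvd n then 1 / of_nat d ^ m else 0 :: 'a)"
    by simp
  show "{d. d dvd n} \<subseteq> {0<..}"
    using assms by (auto intro: Nat.gr0I)
qed (use assms in simp_all)

lemma cohen_ramanujan_div_power_eq_convolution:
  assumes "s > 0" "N > 0"
  shows "cohen_ramanujan N s (int (n ^ s)) / of_nat N ^ (j + s) =
    (\<Sum>d | d dvd N. of_int (moebius_mu d) / of_nat d ^ (j + s) *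
       (if N div d dvd n then 1 / of_nat (N div d) ^ j else 0))"
proof -
  have "of_int (moebius_mu d) / of_nat d ^ (j + s) * (if N div d dvd n then 1 / of_nat (N div d) ^ j else 0) =
      of_int (moebius_mu d) * (if int ((N div d) ^ s) dvd int (n ^ s) then of_nat ((N div d) ^ s) else 0) /
      (of_nat N ^ (j + s) :: complex)"
    if "d dvd N" for d
  proof -
    have "of_nat N ^ (j + s) = (of_nat d ^ (j + s) * (of_nat (N div d) ^ j * of_nat (N div d) ^ s) :: complex)"
      using of_nat_power_mult_cofactor[OF that, of "j + s", where 'a = complex, symmetric]
      by (simp add: power_add mult_ac)
    then show ?thesis
      using that assms by (auto simp: dvd_div_eq_0_iff)
  qed
  then show ?thesis
    using assms by (simp add: cohen_ramanujan_moebius sum_divide_distrib)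
qed

lemma cohen_ramanujan_dirichlet_series:
  assumes "k > 0" "s > 0" "n > 0"
  shows "((\<lambda>r. of_real (zeta (real ((k + 1) * s))) * (cohen_ramanujan r s (int (n ^ s)) / of_nat r ^ ((k + 1) * s)))
           has_sum of_nat (sigma (k * s) n) / of_nat n ^ (k * s)) {0<..}"
proof -
  define K where "K = (k + 1) * s"
  have "K \<ge> 2" using assms(1,2) mult_le_mono[of 2 "k + 1" 1 s] by (simp add: K_def)
  define a where "a = (\<lambda>d. of_int (moebius_mu d) / of_nat d ^ K :: complex)"
  define f where "f m = (if m dvd n then 1 / of_nat m ^ (k * s) else 0 :: complex)" for m
  define F where "F = (of_nat (sigma (k * s) n) / of_nat n ^ (k * s) :: complex)"
  have f: "(f has_sum F) {0<..}"
    unfolding f_def F_def using assms(3) by (rule has_sum_divisor_inverse_powers)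
  have "(\<lambda>m. norm (f m)) summable_on {0<..}"
    by (rule finite_nonzero_values_imp_summable_on, rule finite_subset [of _ "{m. m dvd n}"])
       (use assms(3) in \<open>auto simp: f_def\<close>)
  with moebius_series_abs_summable[OF \<open>K \<ge> 2\<close>]
  have "((\<lambda>N. \<Sum>d | d dvd N. a d * f (N div d)) has_sum infsum a {0<..} * F) {0<..}"
    unfolding a_def infsumI[OF f, symmetric] by (rule has_sum_dirichlet_prod)
  moreover have "(\<Sum>d | d dvd N. a d * f (N div d)) = cohen_ramanujan N s (int (n ^ s)) / of_nat N ^ K"
    if "N \<in> {0<..}" for N
    using cohen_ramanujan_div_power_eq_convolution[of s N n "k * s"] that assms(2)
    by (simp add: K_def a_def f_def add.commute)
  ultimately have "((\<lambda>N. cohen_ramanujan N s (int (n ^ s)) / of_nat N ^ K) has_sum infsum a {0<..} * F) {0<..}"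
    by (rule has_sum_cong [THEN iffD1, rotated])
  then have "((\<lambda>N. of_real (zeta K) * (cohen_ramanujan N s (int (n ^ s)) / of_nat N ^ K))
      has_sum of_real (zeta K) * infsum a {0<..} * F) {0<..}"
    unfolding mult.assoc by (rule has_sum_cmult_right)
  also have "of_real (zeta K) * infsum a {0<..} = 1"
    using moebius_series_mult_zeta[OF \<open>K \<ge> 2\<close>, where 'a = complex] by (simp add: a_def mult.commute)
  finally show ?thesis
    by (simp add: K_def F_def)
qed

theorem mainTheorem2:
  fixes k s n :: nat
  assumes "k \<ge> 1" and "s \<ge> 1" and "n \<ge> 1"
  shows "(\<lambda>r. complex_of_real (zeta (real ((k + 1) * s))) *
            cohen_ramanujan (Suc r) s (int (n ^ s)) / of_nat (Suc r) ^ ((k + 1) * s))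
         sums (of_nat (sigma (k * s) n) / of_nat n ^ (k * s))"
proof -
  have "((\<lambda>r. complex_of_real (zeta ((k + 1) * s)) *
            (cohen_ramanujan r s (int (n ^ s)) / of_nat r ^ ((k + 1) * s)))
         has_sum of_nat (sigma (k * s) n) / of_nat n ^ (k * s)) {0<..}"
    using assms by (intro cohen_ramanujan_dirichlet_series) auto
  also have "?this \<longleftrightarrow> ((\<lambda>r. complex_of_real (zeta ((k + 1) * s)) *
            cohen_ramanujan (Suc r) s (int (n ^ s)) / of_nat (Suc r) ^ ((k + 1) * s))
         has_sum of_nat (sigma (k * s) n) / of_nat n ^ (k * s)) UNIV"
    by (rule has_sum_reindex_bij_witness[where i = Suc and j = "\<lambda>m. m - 1"]) auto
  finally show ?thesis
    by (rule has_sum_imp_sums)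
qed

end
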